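(* Consider the two-dimensional $\mathrm{TM}_z$ Maxwell's equations $\partial_tE_z=\partial_xH_y-\partial_yH_x$, $\partial_tH_x=-\partial_yE_z$, $\partial_tH_y=\partial_xE_z$ with smooth solution, discretized on a (possibly non-rectangular) logically rectangular grid with points $(x_{i,j},y_{i,j})$ and mesh parameter $h$, with time step $\Delta t$. At each grid point $(x^0,y^0)=(x_{i,j},y_{i,j})$ with neighbors $(x^1,y^1),\dots,(x^K,y^K)$ (the points with indices $(i\pm1,j)$, $(i,j\pm1)$, at distance $O(h)$ from $(x^0,y^0)$), let $$A=\begin{pmatrix}1&x^0-x^0&y^0-y^0\\1&x^1-x^0&y^1-y^0\\\vdots&\vdots&\vdots\\1&x^K-x^0&y^K-y^0\end{pmatrix}.$$ Suppose there is a constant $D>0$ such that $\sigma_3(A)\ge Dh$ (the smallest singular value) at every grid point. Then the least square central difference scheme and the least square $\theta$-scheme are both first order accurate.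
   Context: Least squares fitting: for a field component $u$ with values $u^0,\dots,u^K$ at $(x^0,y^0),\dots,(x^K,y^K)$, let $\hat u(x,y)=\hat a+\hat b(x-x^0)+\hat c(y-y^0)$ minimize $\sum_{m=0}^K(\hat u(x^m,y^m)-u^m)^2$, i.e. $(\hat a,\hat b,\hat c)^T=(A^TA)^{-1}A^T(u^0,\dots,u^K)^T$. Denote $\hat u_{i,j}=\hat a$, $(\partial\hat u/\partial x)_{i,j}=\hat b$, $(\partial\hat u/\partial y)_{i,j}=\hat c$, computed from time-level $n$ data. Least square central difference scheme: $(E_z)^{n+1}_{i,j}=(E_z)^n_{i,j}+\Delta t((\partial\hat H_y/\partial x)^n_{i,j}-(\partial\hat H_x/\partial y)^n_{i,j})$, $(H_x)^{n+1}_{i,j}=(H_x)^n_{i,j}-\Delta t(\partial\hat E_z/\partial y)^n_{i,j}$, $(H_y)^{n+1}_{i,j}=(H_y)^n_{i,j}+\Delta t(\partial\hat E_z/\partial x)^n_{i,j}$. Least square $\theta$-scheme: the same, but with $(E_z)^n_{i,j},(H_x)^n_{i,j},(H_y)^n_{i,j}$ on the right replaced by the fitted values $(\hat E_z)^n_{i,j},(\hat H_x)^n_{i,j},(\hat H_y)^n_{i,j}$. *)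

theory Defs
  imports "HOL-Analysis.Analysis"
begin

definition pt :: "(real \<Rightarrow> real \<Rightarrow> real \<Rightarrow> real) \<Rightarrow> real \<Rightarrow> real \<Rightarrow> real \<Rightarrow> real" where
  "pt g t x y = deriv (\<lambda>s. g s x y) t"
definition px :: "(real \<Rightarrow> real \<Rightarrow> real \<Rightarrow> real) \<Rightarrow> real \<Rightarrow> real \<Rightarrow> real \<Rightarrow> real" where
  "px g t x y = deriv (\<lambda>s. g t s y) x"
definition py :: "(real \<Rightarrow> real \<Rightarrow> real \<Rightarrow> real) \<Rightarrow> real \<Rightarrow> real \<Rightarrow> real \<Rightarrow> real" where
  "py g t x y = deriv (\<lambda>s. g t x s) y"

fun Ck :: "nat \<Rightarrow> (real \<Rightarrow> real \<Rightarrow> real \<Rightarrow> real) \<Rightarrow> bool" where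
  "Ck 0 g = continuous_on UNIV (\<lambda>(t, x, y). g t x y)"
| "Ck (Suc k) g = ((\<forall>z. (\<lambda>(t, x, y). g t x y) differentiable (at z))
                    \<and> continuous_on UNIV (\<lambda>(t, x, y). g t x y)
                    \<and> Ck k (pt g) \<and> Ck k (px g) \<and> Ck k (py g))"

definition smooth3 :: "(real \<Rightarrow> real \<Rightarrow> real \<Rightarrow> real) \<Rightarrow> bool" where
  "smooth3 g \<longleftrightarrow> (\<forall>k. Ck k g)"

definition lsq_row :: "(nat \<Rightarrow> real \<times> real) \<Rightarrow> nat \<Rightarrow> real^3" where
  "lsq_row p m = vector [1, fst (p m) - fst (p 0), snd (p m) - snd (p 0)]"

definition sigma_min :: "(nat \<Rightarrow> real \<times> real) \<Rightarrow> nat \<Rightarrow> real" where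
  "sigma_min p K = Inf ((\<lambda>v. sqrt (\<Sum>m\<le>K. (lsq_row p m \<bullet> v)^2)) ` {v :: real^3. norm v = 1})"

text \<open>Least squares coefficients (a,b,c) = (A^T A)^{-1} A^T (u^0..u^K), stored as \$1,\$2,\$3.\<close>
definition lsq_fit :: "(nat \<Rightarrow> real \<times> real) \<Rightarrow> nat \<Rightarrow> (nat \<Rightarrow> real) \<Rightarrow> real^3" where
  "lsq_fit p K u =
     matrix_inv (\<chi> r s. \<Sum>m\<le>K. lsq_row p m $ r * lsq_row p m $ s)
       *v (\<chi> r. \<Sum>m\<le>K. lsq_row p m $ r * u m)"

definition stencil :: "(int \<times> int \<Rightarrow> real \<times> real) \<Rightarrow> int \<Rightarrow> int \<Rightarrow> nat \<Rightarrow> real \<times> real" where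
  "stencil X i j m =
     (if m = 0 then X (i, j) else if m = 1 then X (i + 1, j) else if m = 2 then X (i - 1, j)
      else if m = 3 then X (i, j + 1) else X (i, j - 1))"

definition grid_interior :: "(int \<times> int) set \<Rightarrow> (int \<times> int) set" where
  "grid_interior G = {(i, j). (i, j) \<in> G \<and> (i + 1, j) \<in> G \<and> (i - 1, j) \<in> G \<and> (i, j + 1) \<in> G \<and> (i, j - 1) \<in> G}"

definition sdata :: "(real \<Rightarrow> real \<Rightarrow> real \<Rightarrow> real) \<Rightarrow> real \<Rightarrow> (nat \<Rightarrow> real \<times> real) \<Rightarrow> nat \<Rightarrow> real" where
  "sdata g t p m = g t (fst (p m)) (snd (p m))"

text \<open>Local truncation errors (exact solution at t+dt minus one scheme step applied to exact
 data at t, divided by dt), at the point p 0 with K neighbours.\<close>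
definition trunc_cd ::
  "(real \<Rightarrow> real \<Rightarrow> real \<Rightarrow> real) \<Rightarrow> (real \<Rightarrow> real \<Rightarrow> real \<Rightarrow> real) \<Rightarrow> (real \<Rightarrow> real \<Rightarrow> real \<Rightarrow> real)
    \<Rightarrow> (nat \<Rightarrow> real \<times> real) \<Rightarrow> nat \<Rightarrow> real \<Rightarrow> real \<Rightarrow> real \<times> real \<times> real" where
  "trunc_cd E Hx Hy p K t dt =
    (let fE = lsq_fit p K (sdata E t p); fHx = lsq_fit p K (sdata Hx t p);
         fHy = lsq_fit p K (sdata Hy t p) in
     ((sdata E (t + dt) p 0 - (sdata E t p 0 + dt * (fHy $ 2 - fHx $ 3))) / dt,
      (sdata Hx (t + dt) p 0 - (sdata Hx t p 0 - dt * fE $ 3)) / dt,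
      (sdata Hy (t + dt) p 0 - (sdata Hy t p 0 + dt * fE $ 2)) / dt))"

definition trunc_th ::
  "(real \<Rightarrow> real \<Rightarrow> real \<Rightarrow> real) \<Rightarrow> (real \<Rightarrow> real \<Rightarrow> real \<Rightarrow> real) \<Rightarrow> (real \<Rightarrow> real \<Rightarrow> real \<Rightarrow> real)
    \<Rightarrow> (nat \<Rightarrow> real \<times> real) \<Rightarrow> nat \<Rightarrow> real \<Rightarrow> real \<Rightarrow> real \<times> real \<times> real" where
  "trunc_th E Hx Hy p K t dt =
    (let fE = lsq_fit p K (sdata E t p); fHx = lsq_fit p K (sdata Hx t p);
         fHy = lsq_fit p K (sdata Hy t p) in
     ((sdata E (t + dt) p 0 - (fE $ 1 + dt * (fHy $ 2 - fHx $ 3))) / dt,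
      (sdata Hx (t + dt) p 0 - (fHx $ 1 - dt * fE $ 3)) / dt,
      (sdata Hy (t + dt) p 0 - (fHy $ 1 + dt * fE $ 2)) / dt))"

definition first_order ::
  "((nat \<Rightarrow> real \<times> real) \<Rightarrow> nat \<Rightarrow> real \<Rightarrow> real \<Rightarrow> real \<times> real \<times> real)
    \<Rightarrow> real set \<Rightarrow> (real \<Rightarrow> int \<times> int \<Rightarrow> real \<times> real) \<Rightarrow> (real \<Rightarrow> (int \<times> int) set)
    \<Rightarrow> real \<Rightarrow> real \<Rightarrow> bool" where
  "first_order tau H X G lam T \<longleftrightarrow>
     (\<exists>C. \<forall>h\<in>H. \<forall>(i, j)\<in>grid_interior (G h). \<forall>t\<in>{0..T}.
        let r = tau (stencil (X h) i j) 4 t (lam * h) in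
        \<bar>fst r\<bar> \<le> C * h \<and> \<bar>fst (snd r)\<bar> \<le> C * h \<and> \<bar>snd (snd r)\<bar> \<le> C * h)"

end

theory Submission
  imports Defs
begin

(* The least squares fit reproduces affine data and is stable: if the data are an affine
   function plus a remainder r, the fitted value is off by at most |r|_2 and the fitted
   gradient by at most |r|_2 / sigma_3(A), by Cauchy-Schwarz in the normal equations.
   The stencil data of a C^2 field are its first order Taylor polynomial at the centre plus
   O(h^2), so with sigma_3(A) >= D h fitted values are O(h^2) and fitted derivatives O(h)
   accurate. Expanding the exact solution to first order in time and inserting the Maxwell
   equations, every local truncation error is O(dt) + O(h^2)/dt + O(h) = O(h) for dt = lam h. *)

definition lsq_gram :: "(nat \<Rightarrow> real \<times> real) \<Rightarrow> nat \<Rightarrow> real^3^3" where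
  "lsq_gram p K = (\<chi> r s. \<Sum>m\<le>K. lsq_row p m $ r * lsq_row p m $ s)"

definition lsq_moments :: "(nat \<Rightarrow> real \<times> real) \<Rightarrow> nat \<Rightarrow> (nat \<Rightarrow> real) \<Rightarrow> real^3" where
  "lsq_moments p K u = (\<chi> r. \<Sum>m\<le>K. lsq_row p m $ r * u m)"

lemma lsq_fit_eq: "lsq_fit p K u = matrix_inv (lsq_gram p K) *v lsq_moments p K u"
  unfolding lsq_fit_def lsq_gram_def lsq_moments_def ..

lemma lsq_gram_mult_vec: "lsq_gram p K *v v = lsq_moments p K (\<lambda>m. lsq_row p m \<bullet> v)"
  unfolding lsq_gram_def lsq_moments_def
  by (simp add: vec_eq_iff matrix_vector_mult_def inner_vec_def sum_distrib_left sum_distrib_right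
      mult.assoc mult.commute mult.left_commute sum.swap[where A=UNIV])

lemma inner_lsq_moments: "v \<bullet> lsq_moments p K u = (\<Sum>m\<le>K. (lsq_row p m \<bullet> v) * u m)"
  unfolding lsq_moments_def
  by (simp add: inner_vec_def sum_distrib_left sum_distrib_right
      mult.assoc mult.commute mult.left_commute sum.swap[where A=UNIV])

lemma lsq_moments_add: "lsq_moments p K (\<lambda>m. u m + v m) = lsq_moments p K u + lsq_moments p K v"
  unfolding lsq_moments_def by (simp add: vec_eq_iff distrib_left sum.distrib)

lemma inner_lsq_gram_mult_vec: "w \<bullet> (lsq_gram p K *v w) = (L2_set (\<lambda>m. lsq_row p m \<bullet> w) {..K})\<^sup>2"
  by (simp add: lsq_gram_mult_vec inner_lsq_moments L2_set_def sum_nonneg power2_eq_square)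

lemma lsq_row_inner_vector:
  "lsq_row p m \<bullet> vector [a, b, c] = a + b * (fst (p m) - fst (p 0)) + c * (snd (p m) - snd (p 0))"
  unfolding lsq_row_def by (simp add: inner_vec_def sum_3 mult.commute)

lemma lsq_row_0_inner: "lsq_row p 0 \<bullet> w = w $ 1"
  unfolding lsq_row_def by (simp add: inner_vec_def sum_3)

lemma matrix_inv_mult:
  assumes "invertible A"
  shows "A ** matrix_inv A = mat 1" "matrix_inv A ** A = mat 1"
  using someI_ex[OF assms[unfolded invertible_def]] by (auto simp: matrix_inv_def)

lemma sigma_min_mult_norm_le: "sigma_min p K * norm w \<le> L2_set (\<lambda>m. lsq_row p m \<bullet> w) {..K}"
proof (cases "w = 0")
  case False
  have "sigma_min p K \<le> L2_set (\<lambda>m. lsq_row p m \<bullet> (w /\<^sub>R norm w)) {..K}"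
    unfolding sigma_min_def L2_set_def
    by (rule cINF_lower) (auto intro!: bdd_belowI[where m=0] sum_nonneg simp: False)
  also have "\<dots> = L2_set (\<lambda>m. lsq_row p m \<bullet> w) {..K} / norm w"
    by (simp add: L2_set_right_distrib[symmetric] divide_inverse mult.commute)
  finally show ?thesis
    using False by (simp add: pos_le_divide_eq)
qed simp

lemma invertible_lsq_gram:
  assumes "sigma_min p K > 0"
  shows "invertible (lsq_gram p K)"
proof -
  have "inj ((*v) (lsq_gram p K))"
  proof (rule injI)
    fix v w
    assume "lsq_gram p K *v v = lsq_gram p K *v w"
    then have "(v - w) \<bullet> (lsq_gram p K *v (v - w)) = 0"
      by (simp add: matrix_vector_mult_diff_distrib)
    then have "sigma_min p K * norm (v - w) \<le> 0"
      using sigma_min_mult_norm_le[of p K "v - w"] by (simp add: inner_lsq_gram_mult_vec)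
    then show "v = w"
      using assms by (simp add: mult_le_0_iff)
  qed
  then show ?thesis
    using invertible_left_inverse matrix_left_invertible_injective by blast
qed

lemma lsq_fit_residual_le:
  assumes sigma: "sigma_min p K > 0"
    and u: "\<And>m. m \<le> K \<Longrightarrow> u m = lsq_row p m \<bullet> z + r m"
  shows "L2_set (\<lambda>m. lsq_row p m \<bullet> (lsq_fit p K u - z)) {..K} \<le> L2_set r {..K}"
proof -
  let ?M = "lsq_gram p K" and ?w = "lsq_fit p K u - z"
  let ?N = "L2_set (\<lambda>m. lsq_row p m \<bullet> ?w) {..K}"
  note inv = matrix_inv_mult[OF invertible_lsq_gram[OF sigma]]
  have "lsq_moments p K u = lsq_moments p K (\<lambda>m. lsq_row p m \<bullet> z + r m)"
    unfolding lsq_moments_def using u by (auto simp: vec_eq_iff intro!: sum.cong)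
  then have "lsq_moments p K u = ?M *v z + lsq_moments p K r"
    by (simp add: lsq_moments_add lsq_gram_mult_vec)
  then have "?M *v ?w = lsq_moments p K r"
    by (simp add: lsq_fit_eq matrix_vector_mult_diff_distrib matrix_vector_mul_assoc inv)
  then have "?N\<^sup>2 = (\<Sum>m\<le>K. (lsq_row p m \<bullet> ?w) * r m)"
    by (metis inner_lsq_gram_mult_vec inner_lsq_moments)
  also have "\<dots> \<le> (\<Sum>m\<le>K. \<bar>lsq_row p m \<bullet> ?w\<bar> * \<bar>r m\<bar>)"
    by (intro sum_mono) (metis abs_ge_self abs_mult)
  also have "\<dots> \<le> ?N * L2_set r {..K}"
    by (rule L2_set_mult_ineq)
  finally have "?N * ?N \<le> ?N * L2_set r {..K}"
    by (simp add: power2_eq_square)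
  then show ?thesis
    using L2_set_nonneg[of r "{..K}"] L2_set_nonneg[of "\<lambda>m. lsq_row p m \<bullet> ?w" "{..K}"]
    by (cases "?N = 0") (simp_all add: less_le)
qed

lemma lsq_fit_error_le:
  assumes sigma: "sigma_min p K > 0"
    and u: "\<And>m. m \<le> K \<Longrightarrow>
      u m = a + b * (fst (p m) - fst (p 0)) + c * (snd (p m) - snd (p 0)) + r m"
  shows "\<bar>lsq_fit p K u $ 1 - a\<bar> \<le> L2_set r {..K}"
    and "sigma_min p K * \<bar>lsq_fit p K u $ 2 - b\<bar> \<le> L2_set r {..K}"
    and "sigma_min p K * \<bar>lsq_fit p K u $ 3 - c\<bar> \<le> L2_set r {..K}"
proof -
  define w where "w = lsq_fit p K u - vector [a, b, c]"
  have w: "lsq_fit p K u $ 1 - a = w $ 1" "lsq_fit p K u $ 2 - b = w $ 2"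
    "lsq_fit p K u $ 3 - c = w $ 3"
    by (simp_all add: w_def)
  have res: "L2_set (\<lambda>m. lsq_row p m \<bullet> w) {..K} \<le> L2_set r {..K}"
    unfolding w_def using u by (intro lsq_fit_residual_le sigma) (simp add: lsq_row_inner_vector)
  have "\<bar>w $ 1\<bar> \<le> L2_set (\<lambda>m. lsq_row p m \<bullet> w) {..K}"
    using member_le_L2_set[of "{..K}" 0 "\<lambda>m. \<bar>lsq_row p m \<bullet> w\<bar>"]
    by (simp add: lsq_row_0_inner L2_set_def)
  with res show "\<bar>lsq_fit p K u $ 1 - a\<bar> \<le> L2_set r {..K}"
    unfolding w by linarith
  have "sigma_min p K * \<bar>w $ k\<bar> \<le> L2_set r {..K}" for k
  proof -
    have "sigma_min p K * \<bar>w $ k\<bar> \<le> sigma_min p K * norm w"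
      using sigma component_le_norm_cart[of w k] by (simp add: mult_left_mono)
    also have "\<dots> \<le> L2_set r {..K}"
      using sigma_min_mult_norm_le[of p K w] res by linarith
    finally show ?thesis .
  qed
  then show "sigma_min p K * \<bar>lsq_fit p K u $ 2 - b\<bar> \<le> L2_set r {..K}"
    and "sigma_min p K * \<bar>lsq_fit p K u $ 3 - c\<bar> \<le> L2_set r {..K}"
    unfolding w by blast+
qed

lemma Ck_Suc_differentiable_along:
  assumes "Ck (Suc k) g" and "\<gamma> differentiable at s"
  shows "(\<lambda>s. case \<gamma> s of (t, x, y) \<Rightarrow> g t x y) differentiable at s"
proof -
  have "(\<lambda>(t, x, y). g t x y) differentiable at (\<gamma> s)"
    using assms(1) by (cases "\<gamma> s") auto
  from differentiable_chain_at[OF assms(2) this] show ?thesis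
    by (simp add: o_def)
qed

lemma Ck_Suc_has_pt:
  assumes "Ck (Suc k) g"
  shows "((\<lambda>s. g s x y) has_real_derivative pt g t x y) (at t)"
  using Ck_Suc_differentiable_along[OF assms, of "\<lambda>s. (s, x, y)" t]
  unfolding pt_def by (simp add: DERIV_deriv_iff_real_differentiable)

lemma Ck_Suc_has_px:
  assumes "Ck (Suc k) g"
  shows "((\<lambda>s. g t s y) has_real_derivative px g t x y) (at x)"
  using Ck_Suc_differentiable_along[OF assms, of "\<lambda>s. (t, s, y)" x]
  unfolding px_def by (simp add: DERIV_deriv_iff_real_differentiable)

lemma Ck_Suc_has_py:
  assumes "Ck (Suc k) g"
  shows "((\<lambda>s. g t x s) has_real_derivative py g t x y) (at y)"
  using Ck_Suc_differentiable_along[OF assms, of "\<lambda>s. (t, x, s)" y]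
  unfolding py_def by (simp add: DERIV_deriv_iff_real_differentiable)

lemma Ck_0_bounded_on_compact:
  assumes "Ck 0 g" and "compact S"
  shows "\<exists>B\<ge>0. \<forall>t x y. (t, x, y) \<in> S \<longrightarrow> \<bar>g t x y\<bar> \<le> B"
proof -
  have "compact ((\<lambda>(t, x, y). g t x y) ` S)"
    using assms by (intro compact_continuous_image) (auto intro: continuous_on_subset)
  then obtain B where "\<forall>z\<in>(\<lambda>(t, x, y). g t x y) ` S. \<bar>z\<bar> \<le> B"
    by (auto dest!: compact_imp_bounded simp: bounded_iff)
  then show ?thesis
    by (intro exI[of _ "\<bar>B\<bar>"]) force
qed

lemma abs_diff_le_of_deriv_bound:
  fixes f f' :: "real \<Rightarrow> real"
  assumes "\<And>s. (f has_real_derivative f' s) (at s)"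
    and "\<And>s. s \<in> closed_segment a b \<Longrightarrow> \<bar>f' s\<bar> \<le> B"
  shows "\<bar>f b - f a\<bar> \<le> B * \<bar>b - a\<bar>"
  using field_differentiable_bound[OF convex_closed_segment, of a b f f' B b a] assms
  by (simp add: has_field_derivative_at_within)

lemma taylor_linear_remainder_le:
  fixes f f' f'' :: "real \<Rightarrow> real"
  assumes f': "\<And>s. (f has_real_derivative f' s) (at s)"
    and f'': "\<And>s. (f' has_real_derivative f'' s) (at s)"
    and bound: "\<And>s. s \<in> closed_segment x0 x \<Longrightarrow> \<bar>f'' s\<bar> \<le> M"
  shows "\<bar>f x - f x0 - f' x0 * (x - x0)\<bar> \<le> M * (x - x0)\<^sup>2"
proof -
  have "\<bar>f' s - f' x0\<bar> \<le> M * \<bar>x - x0\<bar>" if s: "s \<in> closed_segment x0 x" for s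
  proof -
    have "closed_segment x0 s \<subseteq> closed_segment x0 x"
      using s by (simp add: subset_closed_segment)
    then have "\<bar>f' s - f' x0\<bar> \<le> M * \<bar>s - x0\<bar>"
      by (intro abs_diff_le_of_deriv_bound[OF f''] bound) blast
    also have "\<dots> \<le> M * \<bar>x - x0\<bar>"
      using s bound[of x0] segment_bound1[OF s] by (intro mult_left_mono) auto
    finally show ?thesis .
  qed
  then have "\<bar>(f x - f' x0 * x) - (f x0 - f' x0 * x0)\<bar> \<le> M * \<bar>x - x0\<bar> * \<bar>x - x0\<bar>"
    by (intro abs_diff_le_of_deriv_bound[where f' = "\<lambda>s. f' s - f' x0"])
      (auto intro!: derivative_eq_intros f')
  then show ?thesis
    by (simp add: algebra_simps power2_eq_square)
qed

definition taylor_remainder_le :: "(real \<Rightarrow> real \<Rightarrow> real \<Rightarrow> real) \<Rightarrow> real set \<Rightarrow> real set \<Rightarrow> real \<Rightarrow> bool" where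
  "taylor_remainder_le g I S M \<longleftrightarrow>
     (\<forall>t\<in>I. \<forall>s\<in>I. \<forall>x\<in>S. \<forall>y\<in>S. \<bar>g s x y - g t x y - pt g t x y * (s - t)\<bar> \<le> M * (s - t)\<^sup>2) \<and>
     (\<forall>t\<in>I. \<forall>x\<in>S. \<forall>y\<in>S. \<forall>x'\<in>S. \<forall>y'\<in>S.
        \<bar>g t x' y' - g t x y - px g t x y * (x' - x) - py g t x y * (y' - y)\<bar>
          \<le> M * ((x' - x)\<^sup>2 + (y' - y)\<^sup>2))"

lemma taylor_remainder_le_mono:
  assumes "taylor_remainder_le g I S M" and "M \<le> M'"
  shows "taylor_remainder_le g I S M'"
proof -
  have "M * d \<le> M' * d" if "0 \<le> d" for d
    using assms(2) that by (rule mult_right_mono)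
  then show ?thesis
    using assms(1) unfolding taylor_remainder_le_def by (meson order_trans add_nonneg_nonneg zero_le_power2)
qed

lemma Ck2_time_remainder_le:
  assumes g: "Ck 2 g" and "convex I"
    and bound: "\<And>s. s \<in> I \<Longrightarrow> \<bar>pt (pt g) s x y\<bar> \<le> B"
    and "t \<in> I" "s \<in> I"
  shows "\<bar>g s x y - g t x y - pt g t x y * (s - t)\<bar> \<le> B * (s - t)\<^sup>2"
proof -
  have g': "Ck (Suc 1) g" "Ck (Suc 0) (pt g)"
    using g by (simp_all add: numeral_2_eq_2)
  have "closed_segment t s \<subseteq> I"
    using assms by (simp add: closed_segment_subset)
  then show ?thesis
    by (intro taylor_linear_remainder_le[OF Ck_Suc_has_pt[OF g'(1)] Ck_Suc_has_pt[OF g'(2)]] bound)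
      auto
qed

lemma abs_mult_le_sum_squares: "\<bar>a\<bar> * \<bar>b\<bar> \<le> b\<^sup>2 + (a::real)\<^sup>2"
  using sum_squares_bound[of "\<bar>a\<bar>" "\<bar>b\<bar>", unfolded mult.assoc power2_abs]
    mult_nonneg_nonneg[OF abs_ge_zero abs_ge_zero, of a b]
  by linarith

lemma Ck2_space_remainder_le:
  assumes g: "Ck 2 g" and "convex S"
    and bounds: "\<And>x y. x \<in> S \<Longrightarrow> y \<in> S \<Longrightarrow>
      \<bar>px (px g) t x y\<bar> \<le> B \<and> \<bar>py (px g) t x y\<bar> \<le> B \<and> \<bar>py (py g) t x y\<bar> \<le> B"
    and S: "x \<in> S" "y \<in> S" "x' \<in> S" "y' \<in> S"
  shows "\<bar>g t x' y' - g t x y - px g t x y * (x' - x) - py g t x y * (y' - y)\<bar>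
    \<le> 2 * B * ((x' - x)\<^sup>2 + (y' - y)\<^sup>2)"
proof -
  have g': "Ck (Suc 1) g" "Ck (Suc 0) (px g)" "Ck (Suc 0) (py g)"
    using g by (simp_all add: numeral_2_eq_2)
  have seg: "closed_segment x x' \<subseteq> S" "closed_segment y y' \<subseteq> S"
    using assms by (simp_all add: closed_segment_subset)
  have B: "0 \<le> B"
    using bounds[OF S(1,2)] by linarith
  have along_x: "\<bar>g t x' y' - g t x y' - px g t x y' * (x' - x)\<bar> \<le> B * (x' - x)\<^sup>2"
    using seg S bounds
    by (intro taylor_linear_remainder_le[OF Ck_Suc_has_px[OF g'(1)] Ck_Suc_has_px[OF g'(2)]]) blast
  have along_y: "\<bar>g t x y' - g t x y - py g t x y * (y' - y)\<bar> \<le> B * (y' - y)\<^sup>2"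
    using seg S bounds
    by (intro taylor_linear_remainder_le[OF Ck_Suc_has_py[OF g'(1)] Ck_Suc_has_py[OF g'(3)]]) blast
  have "\<bar>px g t x y' - px g t x y\<bar> \<le> B * \<bar>y' - y\<bar>"
    using seg S bounds by (intro abs_diff_le_of_deriv_bound[OF Ck_Suc_has_py[OF g'(2)]]) blast
  then have "\<bar>(px g t x y' - px g t x y) * (x' - x)\<bar> \<le> B * \<bar>y' - y\<bar> * \<bar>x' - x\<bar>"
    unfolding abs_mult by (rule mult_right_mono) simp
  also have "\<dots> \<le> B * ((x' - x)\<^sup>2 + (y' - y)\<^sup>2)"
    unfolding mult.assoc using B abs_mult_le_sum_squares[of "y' - y" "x' - x"]
    by (simp add: add.commute mult_left_mono)
  finally have mixed: "\<bar>(px g t x y' - px g t x y) * (x' - x)\<bar> \<le> B * ((x' - x)\<^sup>2 + (y' - y)\<^sup>2)" .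
  have "g t x' y' - g t x y - px g t x y * (x' - x) - py g t x y * (y' - y)
      = (g t x' y' - g t x y' - px g t x y' * (x' - x)) + (px g t x y' - px g t x y) * (x' - x)
        + (g t x y' - g t x y - py g t x y * (y' - y))"
    by (simp add: algebra_simps)
  also have "\<bar>\<dots>\<bar> \<le> B * (x' - x)\<^sup>2 + B * ((x' - x)\<^sup>2 + (y' - y)\<^sup>2) + B * (y' - y)\<^sup>2"
    using along_x mixed along_y by linarith
  also have "\<dots> = 2 * B * ((x' - x)\<^sup>2 + (y' - y)\<^sup>2)"
    by (simp add: algebra_simps)
  finally show ?thesis .
qed

lemma Ck2_taylor_remainder_le:
  assumes g: "Ck 2 g" and I: "compact I" "convex I" and S: "compact S" "convex S"
  shows "\<exists>M. taylor_remainder_le g I S M"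
proof -
  have C0: "Ck 0 (pt (pt g))" "Ck 0 (px (px g))" "Ck 0 (py (px g))" "Ck 0 (py (py g))"
    using g by (simp_all add: numeral_2_eq_2)
  have K: "compact (I \<times> S \<times> S)"
    using I S by (intro compact_Times)
  obtain B1 where B1: "0 \<le> B1" "\<forall>t x y. (t, x, y) \<in> I \<times> S \<times> S \<longrightarrow> \<bar>pt (pt g) t x y\<bar> \<le> B1"
    using Ck_0_bounded_on_compact[OF C0(1) K] by blast
  obtain B2 where B2: "\<forall>t x y. (t, x, y) \<in> I \<times> S \<times> S \<longrightarrow> \<bar>px (px g) t x y\<bar> \<le> B2"
    using Ck_0_bounded_on_compact[OF C0(2) K] by blast
  obtain B3 where B3: "\<forall>t x y. (t, x, y) \<in> I \<times> S \<times> S \<longrightarrow> \<bar>py (px g) t x y\<bar> \<le> B3"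
    using Ck_0_bounded_on_compact[OF C0(3) K] by blast
  obtain B4 where B4: "\<forall>t x y. (t, x, y) \<in> I \<times> S \<times> S \<longrightarrow> \<bar>py (py g) t x y\<bar> \<le> B4"
    using Ck_0_bounded_on_compact[OF C0(4) K] by blast
  define B where "B = max (max B1 B2) (max B3 B4)"
  have B: "0 \<le> B"
    using B1 by (simp add: B_def)
  have bounds: "\<bar>pt (pt g) t x y\<bar> \<le> B \<and>
      \<bar>px (px g) t x y\<bar> \<le> B \<and> \<bar>py (px g) t x y\<bar> \<le> B \<and> \<bar>py (py g) t x y\<bar> \<le> B"
    if "t \<in> I" "x \<in> S" "y \<in> S" for t x y
    using that B1(2) B2 B3 B4 unfolding B_def by (simp add: le_max_iff_disj)
  have "\<bar>g s x y - g t x y - pt g t x y * (s - t)\<bar> \<le> 2 * B * (s - t)\<^sup>2"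
    if "t \<in> I" "s \<in> I" "x \<in> S" "y \<in> S" for t s x y
  proof -
    have "\<bar>g s x y - g t x y - pt g t x y * (s - t)\<bar> \<le> B * (s - t)\<^sup>2"
      using that bounds by (intro Ck2_time_remainder_le[OF g I(2)]) auto
    also have "\<dots> \<le> 2 * B * (s - t)\<^sup>2"
      using B by (simp add: mult_right_mono)
    finally show ?thesis .
  qed
  moreover have "\<bar>g t x' y' - g t x y - px g t x y * (x' - x) - py g t x y * (y' - y)\<bar>
      \<le> 2 * B * ((x' - x)\<^sup>2 + (y' - y)\<^sup>2)"
    if "t \<in> I" "x \<in> S" "y \<in> S" "x' \<in> S" "y' \<in> S" for t x y x' y'
    using that bounds by (intro Ck2_space_remainder_le[OF g S(2)]) auto
  ultimately show ?thesis
    unfolding taylor_remainder_le_def by blast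
qed

lemma taylor_remainder_le_uniform:
  assumes "finite F" and "\<And>g. g \<in> F \<Longrightarrow> Ck 2 g"
    and "compact I" "convex I" "compact S" "convex S"
  shows "\<exists>M\<ge>0. \<forall>g\<in>F. taylor_remainder_le g I S M"
  using assms(1,2)
proof (induction F rule: finite_induct)
  case (insert f F)
  then obtain M Mf where "0 \<le> M" "\<forall>g\<in>F. taylor_remainder_le g I S M" "taylor_remainder_le f I S Mf"
    using Ck2_taylor_remainder_le[of f] assms(3-6) by blast
  moreover have "M \<le> max M Mf" "Mf \<le> max M Mf"
    by simp_all
  ultimately show ?case
    by (intro exI[of _ "max M Mf"]) (auto intro: taylor_remainder_le_mono)
qed auto

lemma lsq_fit_consistent:
  fixes p :: "nat \<Rightarrow> real \<times> real"
  assumes sigma: "D * h \<le> sigma_min p K" and D: "0 < D" and h: "0 < h"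
    and near: "\<And>m. m \<le> K \<Longrightarrow> dist (p m) (p 0) \<le> c * h"
    and remainder: "\<And>m. m \<le> K \<Longrightarrow>
      \<bar>u m - (a + gx * (fst (p m) - fst (p 0)) + gy * (snd (p m) - snd (p 0)))\<bar>
        \<le> M * ((fst (p m) - fst (p 0))\<^sup>2 + (snd (p m) - snd (p 0))\<^sup>2)"
    and M: "0 \<le> M"
  defines "Q \<equiv> real (Suc K) * M * c\<^sup>2"
  shows "\<bar>lsq_fit p K u $ 1 - a\<bar> \<le> Q * h\<^sup>2"
    and "\<bar>lsq_fit p K u $ 2 - gx\<bar> \<le> Q * h / D"
    and "\<bar>lsq_fit p K u $ 3 - gy\<bar> \<le> Q * h / D"
proof -
  define r where "r m = u m - (a + gx * (fst (p m) - fst (p 0)) + gy * (snd (p m) - snd (p 0)))" for m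
  have "\<bar>r m\<bar> \<le> M * (c * h)\<^sup>2" if "m \<le> K" for m
  proof -
    have "(fst (p m) - fst (p 0))\<^sup>2 + (snd (p m) - snd (p 0))\<^sup>2 = (dist (p m) (p 0))\<^sup>2"
      by (simp add: dist_prod_def dist_real_def)
    also have "\<dots> \<le> (c * h)\<^sup>2"
      using near[OF that] by (simp add: power_mono)
    finally show ?thesis
      using remainder[OF that] M unfolding r_def by (meson mult_left_mono order_trans)
  qed
  then have residual: "L2_set r {..K} \<le> Q * h\<^sup>2"
    using L2_set_le_sum_abs[of r "{..K}"] sum_mono[of "{..K}" "\<lambda>m. \<bar>r m\<bar>" "\<lambda>m. M * (c * h)\<^sup>2"]
    by (simp add: Q_def power_mult_distrib)
  have sigma_pos: "0 < sigma_min p K"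
    using sigma D h by (meson mult_pos_pos order_less_le_trans)
  have data: "\<And>m. m \<le> K \<Longrightarrow>
      u m = a + gx * (fst (p m) - fst (p 0)) + gy * (snd (p m) - snd (p 0)) + r m"
    by (simp add: r_def)
  note error = lsq_fit_error_le[OF sigma_pos data]
  note fit_value = order_trans[OF error(1) residual]
  note slopes = order_trans[OF error(2) residual] order_trans[OF error(3) residual]
  have "\<bar>e\<bar> \<le> Q * h / D" if "sigma_min p K * \<bar>e\<bar> \<le> Q * h\<^sup>2" for e
  proof -
    have "D * h * \<bar>e\<bar> \<le> Q * h\<^sup>2"
      using sigma that by (meson abs_ge_zero mult_right_mono order_trans)
    then show ?thesis
      using D h by (simp add: pos_le_divide_eq power2_eq_square mult.commute mult.left_commute)
  qed
  with fit_value slopes show "\<bar>lsq_fit p K u $ 1 - a\<bar> \<le> Q * h\<^sup>2"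
    and "\<bar>lsq_fit p K u $ 2 - gx\<bar> \<le> Q * h / D"
    and "\<bar>lsq_fit p K u $ 3 - gy\<bar> \<le> Q * h / D"
    by blast+
qed

lemma taylor_remainder_le_time_step:
  assumes "taylor_remainder_le g I S M" "t \<in> I" "t + dt \<in> I" "x \<in> S" "y \<in> S"
  shows "\<bar>g (t + dt) x y - g t x y - pt g t x y * dt\<bar> \<le> M * dt\<^sup>2"
  using assms unfolding taylor_remainder_le_def by (metis add_diff_cancel_left')

lemma lsq_fit_field_error:
  fixes p :: "nat \<Rightarrow> real \<times> real"
  assumes taylor: "taylor_remainder_le g I S M" and M: "0 \<le> M" and t: "t \<in> I"
    and stencil: "\<And>m. m \<le> K \<Longrightarrow> p m \<in> S \<times> S" "\<And>m. m \<le> K \<Longrightarrow> dist (p m) (p 0) \<le> c * h"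
    and sigma: "D * h \<le> sigma_min p K" "0 < D" "0 < h"
  defines "Q \<equiv> real (Suc K) * M * c\<^sup>2" and "x0 \<equiv> fst (p 0)" and "y0 \<equiv> snd (p 0)"
  shows "\<bar>lsq_fit p K (sdata g t p) $ 1 - g t x0 y0\<bar> \<le> Q * h\<^sup>2"
    and "\<bar>lsq_fit p K (sdata g t p) $ 2 - px g t x0 y0\<bar> \<le> Q * h / D"
    and "\<bar>lsq_fit p K (sdata g t p) $ 3 - py g t x0 y0\<bar> \<le> Q * h / D"
proof -
  have "\<bar>sdata g t p m - (g t x0 y0 + px g t x0 y0 * (fst (p m) - x0) + py g t x0 y0 * (snd (p m) - y0))\<bar>
      \<le> M * ((fst (p m) - x0)\<^sup>2 + (snd (p m) - y0)\<^sup>2)" if "m \<le> K" for m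
    using taylor t stencil(1)[OF that] stencil(1)[of 0]
    unfolding taylor_remainder_le_def sdata_def x0_def y0_def by (simp add: mem_Times_iff diff_diff_eq)
  then show "\<bar>lsq_fit p K (sdata g t p) $ 1 - g t x0 y0\<bar> \<le> Q * h\<^sup>2"
    and "\<bar>lsq_fit p K (sdata g t p) $ 2 - px g t x0 y0\<bar> \<le> Q * h / D"
    and "\<bar>lsq_fit p K (sdata g t p) $ 3 - py g t x0 y0\<bar> \<le> Q * h / D"
    unfolding Q_def x0_def y0_def using lsq_fit_consistent[OF sigma stencil(2) _ M] by blast+
qed

(* One component of either scheme: v is the value the step starts from (exact for the central
   difference scheme, fitted for the theta-scheme) and d the discrete time derivative. *)
lemma explicit_step_error_le:
  fixes dt h lam :: real
  assumes dt: "dt = lam * h" and pos: "0 < lam" "0 < h" "0 < D" and "0 \<le> M" "0 \<le> Q"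
    and time: "\<bar>u1 - u0 - u' * dt\<bar> \<le> M * dt\<^sup>2"
    and start: "\<bar>v - u0\<bar> \<le> Q * h\<^sup>2"
    and slope: "\<bar>d - u'\<bar> \<le> 2 * Q * h / D"
  shows "\<bar>(u1 - (v + dt * d)) / dt\<bar> \<le> (M * lam + Q / lam + 2 * Q / D) * h"
proof -
  have dt_pos: "0 < dt"
    using dt pos by simp
  have "\<bar>dt * (d - u')\<bar> \<le> dt * (2 * Q * h / D)"
    unfolding abs_mult using dt_pos slope by (simp add: mult_left_mono del: times_divide_eq_right)
  moreover have "u1 - (v + dt * d) = (u1 - u0 - u' * dt) - (v - u0) - dt * (d - u')"
    by (simp add: algebra_simps)
  ultimately have "\<bar>u1 - (v + dt * d)\<bar> \<le> M * dt\<^sup>2 + Q * h\<^sup>2 + dt * (2 * Q * h / D)"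
    using time start by linarith
  also have "\<dots> = (M * lam + Q / lam + 2 * Q / D) * h * dt"
    using dt pos by (simp add: field_simps power2_eq_square)
  finally show ?thesis
    using dt_pos by (simp add: abs_divide pos_divide_le_eq)
qed

definition abs_components_le :: "real \<times> real \<times> real \<Rightarrow> real \<Rightarrow> bool" where
  "abs_components_le r e \<longleftrightarrow> \<bar>fst r\<bar> \<le> e \<and> \<bar>fst (snd r)\<bar> \<le> e \<and> \<bar>snd (snd r)\<bar> \<le> e"

lemma first_orderI:
  assumes "\<And>h i j t. h \<in> H \<Longrightarrow> (i, j) \<in> grid_interior (G h) \<Longrightarrow> t \<in> {0..T} \<Longrightarrow>
    abs_components_le (tau (stencil (X h) i j) 4 t (lam * h)) (C * h)"
  shows "first_order tau H X G lam T"
  using assms unfolding first_order_def abs_components_le_def Let_def by blast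

lemma truncation_errors_le:
  fixes E Hx Hy :: "real \<Rightarrow> real \<Rightarrow> real \<Rightarrow> real" and p :: "nat \<Rightarrow> real \<times> real"
  assumes taylor: "taylor_remainder_le E I S M" "taylor_remainder_le Hx I S M"
      "taylor_remainder_le Hy I S M"
    and M: "0 \<le> M"
    and maxwell: "\<And>t x y. pt E t x y = px Hy t x y - py Hx t x y"
      "\<And>t x y. pt Hx t x y = - py E t x y" "\<And>t x y. pt Hy t x y = px E t x y"
    and stencil: "\<And>m. m \<le> K \<Longrightarrow> p m \<in> S \<times> S" "\<And>m. m \<le> K \<Longrightarrow> dist (p m) (p 0) \<le> c * h"
    and sigma: "D * h \<le> sigma_min p K" "0 < D" "0 < h"
    and lam: "0 < lam"
    and t: "t \<in> I" "t + lam * h \<in> I"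
  defines "Q \<equiv> real (Suc K) * M * c\<^sup>2"
  shows "abs_components_le (trunc_cd E Hx Hy p K t (lam * h)) ((M * lam + Q / lam + 2 * Q / D) * h)"
    and "abs_components_le (trunc_th E Hx Hy p K t (lam * h)) ((M * lam + Q / lam + 2 * Q / D) * h)"
proof -
  define dt x0 y0 where "dt = lam * h" and "x0 = fst (p 0)" and "y0 = snd (p 0)"
  define fE fX fY where "fE = lsq_fit p K (sdata E t p)" and "fX = lsq_fit p K (sdata Hx t p)"
    and "fY = lsq_fit p K (sdata Hy t p)"
  have centre: "x0 \<in> S" "y0 \<in> S"
    using stencil(1)[of 0] by (auto simp: x0_def y0_def mem_Times_iff)
  note time = taylor[THEN taylor_remainder_le_time_step, OF t centre, folded dt_def]
  note fit = lsq_fit_field_error[OF _ M t(1) stencil sigma, folded Q_def x0_def y0_def]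
  note fitE = fit[OF taylor(1), folded fE_def] and fitX = fit[OF taylor(2), folded fX_def]
    and fitY = fit[OF taylor(3), folded fY_def]
  have "0 \<le> Q"
    using M by (simp add: Q_def)
  note step = explicit_step_error_le[OF dt_def lam sigma(3,2) M this]
  have no_shift: "\<bar>u - u\<bar> \<le> Q * h\<^sup>2" for u
    using \<open>0 \<le> Q\<close> by simp
  have slopes: "\<bar>fY $ 2 - fX $ 3 - pt E t x0 y0\<bar> \<le> 2 * Q * h / D"
    "\<bar>- fE $ 3 - pt Hx t x0 y0\<bar> \<le> 2 * Q * h / D" "\<bar>fE $ 2 - pt Hy t x0 y0\<bar> \<le> 2 * Q * h / D"
  proof -
    have "0 \<le> Q * h / D" "2 * Q * h / D = Q * h / D + Q * h / D"
      using \<open>0 \<le> Q\<close> sigma(2,3) by simp_all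
    with fitE(2,3) fitX(3) fitY(2) show
      "\<bar>fY $ 2 - fX $ 3 - pt E t x0 y0\<bar> \<le> 2 * Q * h / D"
      "\<bar>- fE $ 3 - pt Hx t x0 y0\<bar> \<le> 2 * Q * h / D" "\<bar>fE $ 2 - pt Hy t x0 y0\<bar> \<le> 2 * Q * h / D"
      unfolding maxwell by linarith+
  qed
  have "trunc_cd E Hx Hy p K t dt =
      ((E (t + dt) x0 y0 - (E t x0 y0 + dt * (fY $ 2 - fX $ 3))) / dt,
       (Hx (t + dt) x0 y0 - (Hx t x0 y0 + dt * - fE $ 3)) / dt,
       (Hy (t + dt) x0 y0 - (Hy t x0 y0 + dt * fE $ 2)) / dt)"
    by (simp add: trunc_cd_def Let_def sdata_def x0_def y0_def fE_def fX_def fY_def)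
  then show "abs_components_le (trunc_cd E Hx Hy p K t (lam * h)) ((M * lam + Q / lam + 2 * Q / D) * h)"
    unfolding abs_components_le_def dt_def[symmetric]
    using step[OF time(1) no_shift slopes(1)] step[OF time(2) no_shift slopes(2)]
      step[OF time(3) no_shift slopes(3)] by simp
  have "trunc_th E Hx Hy p K t dt =
      ((E (t + dt) x0 y0 - (fE $ 1 + dt * (fY $ 2 - fX $ 3))) / dt,
       (Hx (t + dt) x0 y0 - (fX $ 1 + dt * - fE $ 3)) / dt,
       (Hy (t + dt) x0 y0 - (fY $ 1 + dt * fE $ 2)) / dt)"
    by (simp add: trunc_th_def Let_def sdata_def x0_def y0_def fE_def fX_def fY_def)
  then show "abs_components_le (trunc_th E Hx Hy p K t (lam * h)) ((M * lam + Q / lam + 2 * Q / D) * h)"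
    unfolding abs_components_le_def dt_def[symmetric]
    using step[OF time(1) fitE(1) slopes(1)] step[OF time(2) fitX(1) slopes(2)]
      step[OF time(3) fitY(1) slopes(3)] by simp
qed

lemma stencil_mem_square:
  assumes "(i, j) \<in> grid_interior G" and "m \<le> 4"
    and bounded: "\<And>i j. (i, j) \<in> G \<Longrightarrow> norm (X (i, j)) \<le> R"
  shows "stencil X i j m \<in> {-R..R} \<times> {-R..R}"
proof -
  have "norm (stencil X i j m) \<le> R"
    using assms unfolding grid_interior_def stencil_def by auto
  then show ?thesis
    using norm_fst_le[of "fst (stencil X i j m)" "snd (stencil X i j m)"]
      norm_snd_le[of "snd (stencil X i j m)" "fst (stencil X i j m)"]
    by (auto simp: mem_Times_iff abs_le_iff)
qed

lemma stencil_0 [simp]: "stencil X i j 0 = X (i, j)"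
  by (simp add: stencil_def)

theorem theorem3p4:
  fixes E Hx Hy :: "real \<Rightarrow> real \<Rightarrow> real \<Rightarrow> real"
    and H :: "real set"
    and X :: "real \<Rightarrow> int \<times> int \<Rightarrow> real \<times> real"
    and G :: "real \<Rightarrow> (int \<times> int) set"
    and \<Omega> :: "(real \<times> real) set"
    and T c D lam h0 :: real
  assumes smooth: "smooth3 E" "smooth3 Hx" "smooth3 Hy"
    and maxwell: "\<And>t x y. pt E t x y = px Hy t x y - py Hx t x y"
                 "\<And>t x y. pt Hx t x y = - py E t x y"
                 "\<And>t x y. pt Hy t x y = px E t x y"
    and dom: "compact \<Omega>" "\<And>h i j. h \<in> H \<Longrightarrow> (i, j) \<in> G h \<Longrightarrow> X h (i, j) \<in> \<Omega>"
    and hpos: "\<And>h. h \<in> H \<Longrightarrow> 0 < h \<and> h \<le> h0"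
    and c: "c > 0"
    and mesh: "\<And>h i j m. h \<in> H \<Longrightarrow> (i, j) \<in> grid_interior (G h) \<Longrightarrow> m \<le> 4 \<Longrightarrow>
                 dist (stencil (X h) i j m) (X h (i, j)) \<le> c * h"
    and D: "D > 0"
    and sigma: "\<And>h i j. h \<in> H \<Longrightarrow> (i, j) \<in> grid_interior (G h) \<Longrightarrow>
                 sigma_min (stencil (X h) i j) 4 \<ge> D * h"
    and lam: "lam > 0"
  shows "first_order (trunc_cd E Hx Hy) H X G lam T \<and> first_order (trunc_th E Hx Hy) H X G lam T"
proof -
  obtain R where R: "\<And>q. q \<in> \<Omega> \<Longrightarrow> norm q \<le> R"
    using compact_imp_bounded[OF dom(1)] by (auto simp: bounded_iff)
  define I S where "I = {0..T + lam * h0}" and "S = {-R..R}"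
  obtain M where M: "taylor_remainder_le E I S M" "taylor_remainder_le Hx I S M"
    "taylor_remainder_le Hy I S M" "0 \<le> M"
    using taylor_remainder_le_uniform[of "{E, Hx, Hy}" I S] smooth
    by (auto simp: smooth3_def I_def S_def)
  define C where "C = M * lam + real (Suc 4) * M * c\<^sup>2 / lam + 2 * (real (Suc 4) * M * c\<^sup>2) / D"
  have "abs_components_le (trunc_cd E Hx Hy (stencil (X h) i j) 4 t (lam * h)) (C * h) \<and>
      abs_components_le (trunc_th E Hx Hy (stencil (X h) i j) 4 t (lam * h)) (C * h)"
    if h: "h \<in> H" and ij: "(i, j) \<in> grid_interior (G h)" and t: "t \<in> {0..T}" for h i j t
  proof -
    have "stencil (X h) i j m \<in> S \<times> S" if "m \<le> 4" for m
      unfolding S_def using R dom(2)[OF h] by (intro stencil_mem_square[OF ij that]) blast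
    moreover have "dist (stencil (X h) i j m) (stencil (X h) i j 0) \<le> c * h" if "m \<le> 4" for m
      using mesh[OF h ij that] by simp
    moreover have "0 < lam * h" "lam * h \<le> lam * h0"
      using hpos[OF h] lam by simp_all
    then have "t \<in> I" "t + lam * h \<in> I"
      using t by (auto simp: I_def)
    ultimately show ?thesis
      using truncation_errors_le[OF M maxwell _ _ sigma[OF h ij] D _ lam] hpos[OF h]
      unfolding C_def by blast
  qed
  then show ?thesis
    by (intro conjI first_orderI) blast+
qed

end
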